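(* Let $G$ be a finite simple connected graph other than $K_2$ and let $U$ be a set of leaves of $G$. Then there exists a set $V$ of leaves of $\rho\circ\lambda(G)$ such that \[ \rho\circ\lambda\circ\rho\circ\lambda_U(G)=\rho\circ\lambda_V\circ\rho\circ\lambda(G). \]
   Context: A leaf is a vertex of degree one; two distinct vertices are siblings if they have the same closed neighborhood $N[v]=\{v\}\cup N(v)$. For a graph $G$ other than $K_2$ and a set $S$ of leaves of $G$, $\lambda_S(G)$ is the graph obtained by removing the vertices in $S$; $\lambda(G)$ denotes the graph obtained by removing all leaves of $G$. $\rho(G)$ is the graph obtained from $G$ by contracting each maximal group of siblings to a single vertex (adjacent to the common outside neighbors of the group). Equalities of graphs are understood up to the natural identification of vertices (i.e. as isomorphic graphs). *)

theory Defs
  imports Main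
begin

type_synonym 'a graph = "'a set \<times> ('a \<times> 'a) set"

definition verts :: "'a graph \<Rightarrow> 'a set" where
  "verts G = fst G"

definition edges :: "'a graph \<Rightarrow> ('a \<times> 'a) set" where
  "edges G = snd G"

definition simple_graph :: "'a graph \<Rightarrow> bool" where
  "simple_graph G \<longleftrightarrow> finite (verts G) \<and> edges G \<subseteq> verts G \<times> verts G
     \<and> sym (edges G) \<and> (\<forall>v. (v, v) \<notin> edges G)"

definition connected_graph :: "'a graph \<Rightarrow> bool" where
  "connected_graph G \<longleftrightarrow> verts G \<noteq> {} \<and>
     (\<forall>u \<in> verts G. \<forall>v \<in> verts G. (u, v) \<in> (edges G)\<^sup>*)"

definition is_K2 :: "'a graph \<Rightarrow> bool" where
  "is_K2 G \<longleftrightarrow> card (verts G) = 2 \<and>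
     (\<forall>u \<in> verts G. \<forall>v \<in> verts G. u \<noteq> v \<longrightarrow> (u, v) \<in> edges G)"

definition nbrs :: "'a graph \<Rightarrow> 'a \<Rightarrow> 'a set" where
  "nbrs G v = {u. (v, u) \<in> edges G}"

definition closed_nbrs :: "'a graph \<Rightarrow> 'a \<Rightarrow> 'a set" where
  "closed_nbrs G v = insert v (nbrs G v)"

definition is_leaf :: "'a graph \<Rightarrow> 'a \<Rightarrow> bool" where
  "is_leaf G v \<longleftrightarrow> v \<in> verts G \<and> card (nbrs G v) = 1"

definition leaves :: "'a graph \<Rightarrow> 'a set" where
  "leaves G = {v. is_leaf G v}"

definition lambda_S :: "'a set \<Rightarrow> 'a graph \<Rightarrow> 'a graph" where
  "lambda_S S G = (verts G - S, edges G \<inter> ((verts G - S) \<times> (verts G - S)))"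

definition lambda :: "'a graph \<Rightarrow> 'a graph" where
  "lambda G = lambda_S (leaves G) G"

definition sib_class :: "'a graph \<Rightarrow> 'a \<Rightarrow> 'a set" where
  "sib_class G v = {u \<in> verts G. closed_nbrs G u = closed_nbrs G v}"

definition rho :: "'a graph \<Rightarrow> 'a set graph" where
  "rho G = (sib_class G ` verts G,
            {(C, D). C \<in> sib_class G ` verts G \<and> D \<in> sib_class G ` verts G \<and> C \<noteq> D
                     \<and> (\<exists>u \<in> C. \<exists>w \<in> D. (u, w) \<in> edges G)})"

definition graph_iso :: "'a graph \<Rightarrow> 'b graph \<Rightarrow> bool" where
  "graph_iso G H \<longleftrightarrow> (\<exists>f. bij_betw f (verts G) (verts H) \<and>
     (\<forall>u \<in> verts G. \<forall>v \<in> verts G. (u, v) \<in> edges G \<longleftrightarrow> (f u, f v) \<in> edges H))"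

end

theory Submission
  imports Defs
begin

(* The contraction rho only sees the relation "v lies in the closed neighbourhood of u": a
   surjection between vertex sets that preserves and reflects it induces an isomorphism of the
   contracted graphs. Hence deleting vertices that keep a sibling does not change rho, and
   deleting a set S of vertices of rho G amounts to deleting the union of S in G.

   Let H = lambda_S U G, X = lambda G, let W be the union of the leaf classes of rho H and V the
   set of leaves of rho X contained in W. Then
     rho (lambda (rho H)) ~ rho (H - W) ~ rho (H - W - leaves G) = rho (X - Union V - W)
       ~ rho (X - Union V) ~ rho (lambda_S V (rho X)).
   The second step holds because a leaf of G surviving in H - W is a sibling in H of its
   neighbour, for otherwise its class would be a leaf of rho H. For the fourth, a vertex b of W
   surviving in X - Union V has a unique neighbouring class in rho H; a vertex d of it either is
   a sibling of b in X outside W (two leaf classes of rho are never adjacent), or makes the class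
   of b in X a leaf of rho X inside W, which would put b into Union V. *)

definition undirected_graph :: "'a graph \<Rightarrow> bool" where
  "undirected_graph G \<longleftrightarrow> edges G \<subseteq> verts G \<times> verts G \<and> sym (edges G)"

lemma simple_graph_imp_undirected_graph: "simple_graph G \<Longrightarrow> undirected_graph G"
  by (simp add: simple_graph_def undirected_graph_def)

lemma verts_lambda_S [simp]: "verts (lambda_S S G) = verts G - S"
  by (simp add: lambda_S_def verts_def)

lemma edges_lambda_S [simp]: "edges (lambda_S S G) = edges G \<inter> (verts G - S) \<times> (verts G - S)"
  by (simp add: lambda_S_def verts_def edges_def)

lemma lambda_S_lambda_S: "lambda_S S (lambda_S T G) = lambda_S (T \<union> S) G"
  by (auto simp: lambda_S_def verts_def edges_def)

lemma verts_rho [simp]: "verts (rho G) = sib_class G ` verts G"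
  by (simp add: rho_def verts_def)

lemma edges_rho: "edges (rho G) = {(C, D). C \<in> sib_class G ` verts G \<and> D \<in> sib_class G ` verts G
    \<and> C \<noteq> D \<and> (\<exists>u \<in> C. \<exists>w \<in> D. (u, w) \<in> edges G)}"
  by (simp add: rho_def edges_def)

lemma undirected_graph_lambda_S: "undirected_graph G \<Longrightarrow> undirected_graph (lambda_S S G)"
  unfolding undirected_graph_def sym_def by auto

lemma undirected_graph_rho: "undirected_graph G \<Longrightarrow> undirected_graph (rho G)"
  unfolding undirected_graph_def sym_def by (auto simp: edges_rho; blast)

lemma mem_closed_nbrs_iff: "u \<in> closed_nbrs G v \<longleftrightarrow> u = v \<or> (v, u) \<in> edges G"
  by (auto simp: closed_nbrs_def nbrs_def)

lemma closed_nbrs_self [simp]: "v \<in> closed_nbrs G v"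
  by (simp add: mem_closed_nbrs_iff)

lemma closed_nbrs_sym: "undirected_graph G \<Longrightarrow> u \<in> closed_nbrs G v \<longleftrightarrow> v \<in> closed_nbrs G u"
  unfolding undirected_graph_def sym_def mem_closed_nbrs_iff by blast

lemma closed_nbrs_subset_verts: "undirected_graph G \<Longrightarrow> v \<in> verts G \<Longrightarrow> closed_nbrs G v \<subseteq> verts G"
  unfolding undirected_graph_def mem_closed_nbrs_iff by (auto simp: mem_closed_nbrs_iff)

lemma closed_nbrs_lambda_S:
  "v \<in> verts G - S \<Longrightarrow> closed_nbrs (lambda_S S G) v = closed_nbrs G v \<inter> (verts G - S)"
  by (auto simp: mem_closed_nbrs_iff)

lemma nbrs_eq_closed_nbrs_Diff: "(v, v) \<notin> edges G \<Longrightarrow> nbrs G v = closed_nbrs G v - {v}"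
  by (auto simp: closed_nbrs_def nbrs_def)

lemma mem_sib_class_iff: "u \<in> sib_class G v \<longleftrightarrow> u \<in> verts G \<and> closed_nbrs G u = closed_nbrs G v"
  by (simp add: sib_class_def)

lemma sib_class_eq_iff:
  "u \<in> verts G \<Longrightarrow> sib_class G u = sib_class G v \<longleftrightarrow> closed_nbrs G u = closed_nbrs G v"
  unfolding sib_class_def by blast

lemma sib_class_self: "v \<in> verts G \<Longrightarrow> v \<in> sib_class G v"
  by (simp add: mem_sib_class_iff)

lemma graph_iso_sym:
  assumes "graph_iso G H"
  shows "graph_iso H G"
proof -
  obtain f where f: "bij_betw f (verts G) (verts H)"
    and adj: "\<forall>u \<in> verts G. \<forall>v \<in> verts G. (u, v) \<in> edges G \<longleftrightarrow> (f u, f v) \<in> edges H"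
    using assms unfolding graph_iso_def by blast
  let ?g = "inv_into (verts G) f"
  have "bij_betw ?g (verts H) (verts G)"
    using f by (rule bij_betw_inv_into)
  moreover have "(u, v) \<in> edges H \<longleftrightarrow> (?g u, ?g v) \<in> edges G" if "u \<in> verts H" "v \<in> verts H" for u v
    using adj that f bij_betw_inv_into_right[OF f] bij_betwE[OF \<open>bij_betw ?g _ _\<close>] by metis
  ultimately show ?thesis
    unfolding graph_iso_def by blast
qed

lemma graph_iso_trans [trans]:
  assumes "graph_iso G H" and "graph_iso H K"
  shows "graph_iso G K"
proof -
  obtain f where f: "bij_betw f (verts G) (verts H)"
    and adj_f: "\<forall>u \<in> verts G. \<forall>v \<in> verts G. (u, v) \<in> edges G \<longleftrightarrow> (f u, f v) \<in> edges H"
    using assms(1) unfolding graph_iso_def by blast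
  obtain g where g: "bij_betw g (verts H) (verts K)"
    and adj_g: "\<forall>u \<in> verts H. \<forall>v \<in> verts H. (u, v) \<in> edges H \<longleftrightarrow> (g u, g v) \<in> edges K"
    using assms(2) unfolding graph_iso_def by blast
  have "bij_betw (g \<circ> f) (verts G) (verts K)"
    using f g by (rule bij_betw_trans)
  moreover have "\<forall>u \<in> verts G. \<forall>v \<in> verts G. (u, v) \<in> edges G \<longleftrightarrow> ((g \<circ> f) u, (g \<circ> f) v) \<in> edges K"
    using adj_f adj_g bij_betwE[OF f] by simp
  ultimately show ?thesis
    unfolding graph_iso_def by blast
qed

lemma edges_rho_sib_class_iff:
  assumes G: "undirected_graph G" and "u \<in> verts G" and "v \<in> verts G"
  shows "(sib_class G u, sib_class G v) \<in> edges (rho G) \<longleftrightarrow>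
         closed_nbrs G u \<noteq> closed_nbrs G v \<and> v \<in> closed_nbrs G u"
proof
  assume edge: "(sib_class G u, sib_class G v) \<in> edges (rho G)"
  then have ne: "closed_nbrs G u \<noteq> closed_nbrs G v"
    using assms sib_class_eq_iff by (fastforce simp: edges_rho)
  obtain u' v' where "u' \<in> sib_class G u" "v' \<in> sib_class G v" "(u', v') \<in> edges G"
    using edge by (auto simp: edges_rho)
  then have "closed_nbrs G u' = closed_nbrs G u" "closed_nbrs G v' = closed_nbrs G v"
    and "v' \<in> closed_nbrs G u'"
    by (auto simp: mem_sib_class_iff mem_closed_nbrs_iff)
  then have "u \<in> closed_nbrs G v'"
    using closed_nbrs_sym[OF G] by simp
  then have "v \<in> closed_nbrs G u"
    using closed_nbrs_sym[OF G] \<open>closed_nbrs G v' = _\<close> by simp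
  with ne show "closed_nbrs G u \<noteq> closed_nbrs G v \<and> v \<in> closed_nbrs G u" by blast
next
  assume "closed_nbrs G u \<noteq> closed_nbrs G v \<and> v \<in> closed_nbrs G u"
  then have "sib_class G u \<noteq> sib_class G v" and "(u, v) \<in> edges G"
    using sib_class_eq_iff[OF assms(2)] by (auto simp: mem_closed_nbrs_iff)
  moreover have "sib_class G u \<in> sib_class G ` verts G" "sib_class G v \<in> sib_class G ` verts G"
    using assms by simp_all
  ultimately show "(sib_class G u, sib_class G v) \<in> edges (rho G)"
    using sib_class_self[OF assms(2)] sib_class_self[OF assms(3)] unfolding edges_rho by blast
qed

lemma sib_class_mem_closed_nbrs_rho_iff:
  assumes G: "undirected_graph G" and "u \<in> verts G" and "v \<in> verts G"
  shows "sib_class G v \<in> closed_nbrs (rho G) (sib_class G u) \<longleftrightarrow> v \<in> closed_nbrs G u"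
proof -
  have "v \<in> closed_nbrs G u" if "closed_nbrs G v = closed_nbrs G u"
    using that closed_nbrs_self by metis
  then show ?thesis
    unfolding mem_closed_nbrs_iff[of "sib_class G v"] edges_rho_sib_class_iff[OF assms]
    using sib_class_eq_iff[OF assms(3), of u] by auto
qed

lemma graph_iso_rho_if_closed_nbrs_map:
  assumes Y: "undirected_graph Y" and Z: "undirected_graph Z"
    and onto: "f ` verts Y = verts Z"
    and adj: "\<And>u v. u \<in> verts Y \<Longrightarrow> v \<in> verts Y \<Longrightarrow>
                v \<in> closed_nbrs Y u \<longleftrightarrow> f v \<in> closed_nbrs Z (f u)"
  shows "graph_iso (rho Y) (rho Z)"
proof -
  have f_verts: "f u \<in> verts Z" if "u \<in> verts Y" for u
    using onto that by blast
  have closed_nbrs_image: "closed_nbrs Z (f u) = f ` closed_nbrs Y u" if u: "u \<in> verts Y" for u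
  proof
    show "closed_nbrs Z (f u) \<subseteq> f ` closed_nbrs Y u"
    proof
      fix w assume w: "w \<in> closed_nbrs Z (f u)"
      then obtain v where "v \<in> verts Y" "w = f v"
        using closed_nbrs_subset_verts[OF Z f_verts[OF u]] onto by blast
      with w show "w \<in> f ` closed_nbrs Y u"
        using adj[OF u] by blast
    qed
    show "f ` closed_nbrs Y u \<subseteq> closed_nbrs Z (f u)"
      using adj[OF u] closed_nbrs_subset_verts[OF Y u] by blast
  qed
  have siblings_iff: "closed_nbrs Z (f u) = closed_nbrs Z (f v) \<longleftrightarrow> closed_nbrs Y u = closed_nbrs Y v"
    if "u \<in> verts Y" "v \<in> verts Y" for u v
  proof -
    have "closed_nbrs Y w = {x \<in> verts Y. f x \<in> closed_nbrs Z (f w)}" if "w \<in> verts Y" for w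
      using adj[OF that] closed_nbrs_subset_verts[OF Y that] by blast
    then show ?thesis
      using closed_nbrs_image that by metis
  qed
  have sib_class_image: "f ` sib_class Y u = sib_class Z (f u)" if u: "u \<in> verts Y" for u
  proof
    show "f ` sib_class Y u \<subseteq> sib_class Z (f u)"
      using siblings_iff[OF _ u] f_verts by (auto simp: mem_sib_class_iff)
    show "sib_class Z (f u) \<subseteq> f ` sib_class Y u"
    proof
      fix w assume w: "w \<in> sib_class Z (f u)"
      then obtain v where "v \<in> verts Y" "w = f v"
        using onto by (auto simp: mem_sib_class_iff)
      with w show "w \<in> f ` sib_class Y u"
        using siblings_iff[OF _ u] by (auto simp: mem_sib_class_iff)
    qed
  qed
  have "bij_betw (image f) (verts (rho Y)) (verts (rho Z))"
  proof (rule bij_betw_imageI)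
    show "inj_on (image f) (verts (rho Y))"
    proof (rule inj_onI)
      fix C D assume "C \<in> verts (rho Y)" "D \<in> verts (rho Y)" and eq: "f ` C = f ` D"
      then obtain u v where u: "u \<in> verts Y" "C = sib_class Y u"
        and v: "v \<in> verts Y" "D = sib_class Y v"
        by auto
      have "sib_class Z (f u) = sib_class Z (f v)"
        using eq sib_class_image u v by simp
      then show "C = D"
        using u v siblings_iff sib_class_eq_iff f_verts by metis
    qed
    have "image f ` verts (rho Y) = (\<lambda>u. sib_class Z (f u)) ` verts Y"
      using sib_class_image by (simp add: image_image)
    also have "\<dots> = verts (rho Z)"
      using onto by (metis image_image verts_rho)
    finally show "image f ` verts (rho Y) = verts (rho Z)" .
  qed
  moreover have "(C, D) \<in> edges (rho Y) \<longleftrightarrow> (f ` C, f ` D) \<in> edges (rho Z)"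
    if CD: "C \<in> verts (rho Y)" "D \<in> verts (rho Y)" for C D
  proof -
    obtain u v where u: "u \<in> verts Y" "C = sib_class Y u" and v: "v \<in> verts Y" "D = sib_class Y v"
      using CD by auto
    have "(C, D) \<in> edges (rho Y) \<longleftrightarrow> closed_nbrs Y u \<noteq> closed_nbrs Y v \<and> v \<in> closed_nbrs Y u"
      using edges_rho_sib_class_iff[OF Y u(1) v(1)] u(2) v(2) by simp
    also have "\<dots> \<longleftrightarrow> closed_nbrs Z (f u) \<noteq> closed_nbrs Z (f v) \<and> f v \<in> closed_nbrs Z (f u)"
      using siblings_iff[OF u(1) v(1)] adj[OF u(1) v(1)] by simp
    also have "\<dots> \<longleftrightarrow> (f ` C, f ` D) \<in> edges (rho Z)"
      using edges_rho_sib_class_iff[OF Z f_verts[OF u(1)] f_verts[OF v(1)]]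
        sib_class_image[OF u(1)] sib_class_image[OF v(1)] u(2) v(2) by simp
    finally show ?thesis .
  qed
  ultimately show ?thesis
    unfolding graph_iso_def by blast
qed

lemma sib_class_of_mem: "C \<in> verts (rho G) \<Longrightarrow> u \<in> C \<Longrightarrow> C = sib_class G u"
  by (auto simp: sib_class_def)

lemma graph_iso_rho_lambda_S_Union:
  assumes G: "undirected_graph G" and S: "S \<subseteq> verts (rho G)"
  shows "graph_iso (rho (lambda_S (\<Union>S) G)) (rho (lambda_S S (rho G)))"
proof (rule graph_iso_rho_if_closed_nbrs_map[where f = "sib_class G"])
  show "undirected_graph (lambda_S (\<Union>S) G)" "undirected_graph (lambda_S S (rho G))"
    using G by (simp_all add: undirected_graph_lambda_S undirected_graph_rho)
  have in_S_iff: "sib_class G u \<in> S \<longleftrightarrow> u \<in> \<Union>S" if u: "u \<in> verts G" for u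
  proof
    assume "sib_class G u \<in> S"
    then show "u \<in> \<Union>S"
      using sib_class_self[OF u] by blast
  next
    assume "u \<in> \<Union>S"
    then obtain C where "C \<in> S" "u \<in> C"
      by blast
    then show "sib_class G u \<in> S"
      using S sib_class_of_mem[of C G u] by auto
  qed
  show "sib_class G ` verts (lambda_S (\<Union>S) G) = verts (lambda_S S (rho G))"
  proof (intro equalityI subsetI)
    fix C assume "C \<in> sib_class G ` verts (lambda_S (\<Union>S) G)"
    then show "C \<in> verts (lambda_S S (rho G))"
      using in_S_iff by auto
  next
    fix C assume "C \<in> verts (lambda_S S (rho G))"
    then obtain u where "u \<in> verts G" "C = sib_class G u" "C \<notin> S"
      by auto
    then show "C \<in> sib_class G ` verts (lambda_S (\<Union>S) G)"
      using in_S_iff by simp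
  qed
  fix u v assume u: "u \<in> verts (lambda_S (\<Union>S) G)" and v: "v \<in> verts (lambda_S (\<Union>S) G)"
  then have classes: "sib_class G u \<in> verts (rho G) - S" "sib_class G v \<in> verts (rho G) - S"
    using in_S_iff by auto
  have "v \<in> closed_nbrs (lambda_S (\<Union>S) G) u \<longleftrightarrow> v \<in> closed_nbrs G u"
    using u v by (simp add: closed_nbrs_lambda_S)
  also have "\<dots> \<longleftrightarrow> sib_class G v \<in> closed_nbrs (rho G) (sib_class G u)"
    using u v sib_class_mem_closed_nbrs_rho_iff[OF G] by simp
  also have "\<dots> \<longleftrightarrow> sib_class G v \<in> closed_nbrs (lambda_S S (rho G)) (sib_class G u)"
    using classes by (simp add: closed_nbrs_lambda_S)
  finally show "v \<in> closed_nbrs (lambda_S (\<Union>S) G) u \<longleftrightarrow>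
      sib_class G v \<in> closed_nbrs (lambda_S S (rho G)) (sib_class G u)" .
qed

lemma graph_iso_rho_lambda_S_of_siblings:
  assumes G: "undirected_graph G"
    and siblings: "\<And>v. v \<in> verts G \<inter> S \<Longrightarrow> \<exists>w \<in> verts G - S. closed_nbrs G w = closed_nbrs G v"
  shows "graph_iso (rho G) (rho (lambda_S S G))"
proof -
  define r where
    "r v = (if v \<in> S then SOME w. w \<in> verts G - S \<and> closed_nbrs G w = closed_nbrs G v else v)" for v
  have r: "r v \<in> verts G - S \<and> closed_nbrs G (r v) = closed_nbrs G v" if "v \<in> verts G" for v
  proof (cases "v \<in> S")
    case True
    then have "\<exists>w. w \<in> verts G - S \<and> closed_nbrs G w = closed_nbrs G v"
      using siblings that by blast
    then show ?thesis
      using True someI_ex by (simp add: r_def)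
  qed (use that in \<open>simp add: r_def\<close>)
  show ?thesis
  proof (rule graph_iso_rho_if_closed_nbrs_map[where f = r])
    show "undirected_graph (lambda_S S G)"
      using G by (rule undirected_graph_lambda_S)
    show "r ` verts G = verts (lambda_S S G)"
      using r by (force simp: r_def)
    fix u v assume u: "u \<in> verts G" and v: "v \<in> verts G"
    have "v \<in> closed_nbrs G u \<longleftrightarrow> u \<in> closed_nbrs G (r v)"
      using r[OF v] closed_nbrs_sym[OF G] by simp
    also have "\<dots> \<longleftrightarrow> r v \<in> closed_nbrs G (r u)"
      using r[OF u] closed_nbrs_sym[OF G] by simp
    also have "\<dots> \<longleftrightarrow> r v \<in> closed_nbrs (lambda_S S G) (r u)"
      using r[OF u] r[OF v] by (simp add: closed_nbrs_lambda_S)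
    finally show "v \<in> closed_nbrs G u \<longleftrightarrow> r v \<in> closed_nbrs (lambda_S S G) (r u)" .
  qed (rule G)
qed

lemma leaves_subset_verts: "leaves G \<subseteq> verts G"
  by (auto simp: leaves_def is_leaf_def)

lemma mem_Union_leaves_rho_iff:
  "v \<in> \<Union>(leaves (rho G)) \<longleftrightarrow> v \<in> verts G \<and> is_leaf (rho G) (sib_class G v)"
proof
  assume "v \<in> \<Union>(leaves (rho G))"
  then obtain C where C: "is_leaf (rho G) C" "v \<in> C"
    by (auto simp: leaves_def)
  then have "C = sib_class G v"
    using sib_class_of_mem[of C G v] by (simp add: is_leaf_def)
  with C show "v \<in> verts G \<and> is_leaf (rho G) (sib_class G v)"
    by (simp add: mem_sib_class_iff)
next
  assume "v \<in> verts G \<and> is_leaf (rho G) (sib_class G v)"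
  then show "v \<in> \<Union>(leaves (rho G))"
    unfolding leaves_def using sib_class_self[of v G] by blast
qed

lemma closed_nbrs_rho_sib_class:
  assumes G: "undirected_graph G" and b: "b \<in> verts G"
  shows "closed_nbrs (rho G) (sib_class G b) = sib_class G ` closed_nbrs G b"
proof (intro equalityI subsetI)
  fix D assume D: "D \<in> closed_nbrs (rho G) (sib_class G b)"
  then have "D \<in> verts (rho G)"
    using closed_nbrs_subset_verts[OF undirected_graph_rho[OF G]] b by auto
  then obtain y where y: "y \<in> verts G" "D = sib_class G y"
    by auto
  then show "D \<in> sib_class G ` closed_nbrs G b"
    using D sib_class_mem_closed_nbrs_rho_iff[OF G b] by auto
next
  fix D assume "D \<in> sib_class G ` closed_nbrs G b"
  then obtain y where "y \<in> closed_nbrs G b" "D = sib_class G y"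
    by blast
  then show "D \<in> closed_nbrs (rho G) (sib_class G b)"
    using sib_class_mem_closed_nbrs_rho_iff[OF G b] closed_nbrs_subset_verts[OF G b] by auto
qed

lemma image_Diff_singleton_eq_singleton_iff:
  "(\<exists>D. f ` A - {a} = {D}) \<longleftrightarrow> (\<exists>d \<in> A. f d \<noteq> a \<and> (\<forall>y \<in> A. f y = a \<or> f y = f d))"
proof
  assume "\<exists>D. f ` A - {a} = {D}"
  then obtain D where D: "f ` A - {a} = {D}"
    by blast
  then obtain d where "d \<in> A" "f d = D" "D \<noteq> a"
    by (metis Diff_iff imageE insertI1)
  with D show "\<exists>d \<in> A. f d \<noteq> a \<and> (\<forall>y \<in> A. f y = a \<or> f y = f d)"
    by blast
qed blast

lemma is_leaf_rho_sib_class_iff: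
  assumes G: "undirected_graph G" and b: "b \<in> verts G"
  shows "is_leaf (rho G) (sib_class G b) \<longleftrightarrow>
    (\<exists>d \<in> closed_nbrs G b. closed_nbrs G d \<noteq> closed_nbrs G b \<and>
      (\<forall>y \<in> closed_nbrs G b. closed_nbrs G y = closed_nbrs G b \<or>
            closed_nbrs G y = closed_nbrs G d))"
proof -
  let ?N = "closed_nbrs G b"
  have N: "?N \<subseteq> verts G"
    using closed_nbrs_subset_verts[OF G b] .
  have "(sib_class G b, sib_class G b) \<notin> edges (rho G)"
    by (simp add: edges_rho)
  then have nbrs: "nbrs (rho G) (sib_class G b) = sib_class G ` ?N - {sib_class G b}"
    using closed_nbrs_rho_sib_class[OF G b] by (simp add: nbrs_eq_closed_nbrs_Diff)
  have "sib_class G b \<in> verts (rho G)"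
    using b by simp
  then have "is_leaf (rho G) (sib_class G b) \<longleftrightarrow> card (sib_class G ` ?N - {sib_class G b}) = 1"
    by (simp only: is_leaf_def nbrs simp_thms)
  also have "\<dots> \<longleftrightarrow> (\<exists>D. sib_class G ` ?N - {sib_class G b} = {D})"
    by (simp only: One_nat_def card_1_singleton_iff)
  also have "\<dots> \<longleftrightarrow> (\<exists>d \<in> ?N. sib_class G d \<noteq> sib_class G b \<and>
      (\<forall>y \<in> ?N. sib_class G y = sib_class G b \<or> sib_class G y = sib_class G d))"
    by (rule image_Diff_singleton_eq_singleton_iff)
  also have "\<dots> \<longleftrightarrow> (\<exists>d \<in> ?N. closed_nbrs G d \<noteq> closed_nbrs G b \<and>
      (\<forall>y \<in> ?N. closed_nbrs G y = closed_nbrs G b \<or> closed_nbrs G y = closed_nbrs G d))"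
  proof -
    have eq: "sib_class G y = sib_class G z \<longleftrightarrow> closed_nbrs G y = closed_nbrs G z" if "y \<in> ?N" for y z
      using that N sib_class_eq_iff[of y G z] by auto
    show ?thesis
      using eq[of b] eq by (metis closed_nbrs_self)
  qed
  finally show ?thesis .
qed

lemma rho_leafE:
  assumes G: "undirected_graph G" and b: "b \<in> verts G" and leaf: "is_leaf (rho G) (sib_class G b)"
  obtains d where "d \<in> closed_nbrs G b" "closed_nbrs G d \<noteq> closed_nbrs G b"
    "closed_nbrs G b \<subseteq> closed_nbrs G d"
    "\<forall>y \<in> closed_nbrs G b. closed_nbrs G y = closed_nbrs G b \<or> closed_nbrs G y = closed_nbrs G d"
proof -
  have "\<exists>d \<in> closed_nbrs G b. closed_nbrs G d \<noteq> closed_nbrs G b \<and>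
      (\<forall>y \<in> closed_nbrs G b. closed_nbrs G y = closed_nbrs G b \<or> closed_nbrs G y = closed_nbrs G d)"
    using leaf is_leaf_rho_sib_class_iff[OF G b] by simp
  then obtain d where d: "d \<in> closed_nbrs G b" "closed_nbrs G d \<noteq> closed_nbrs G b"
    and two: "\<forall>y \<in> closed_nbrs G b. closed_nbrs G y = closed_nbrs G b \<or>
          closed_nbrs G y = closed_nbrs G d"
    by blast
  have "closed_nbrs G b \<subseteq> closed_nbrs G d"
  proof
    fix y assume y: "y \<in> closed_nbrs G b"
    show "y \<in> closed_nbrs G d"
    proof (cases "closed_nbrs G y = closed_nbrs G b")
      case True
      then have "d \<in> closed_nbrs G y"
        using d(1) by simp
      then show ?thesis
        using closed_nbrs_sym[OF G] by blast
    next
      case False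
      then have "closed_nbrs G y = closed_nbrs G d"
        using two y by blast
      then show ?thesis
        using closed_nbrs_self[of y G] by simp
    qed
  qed
  with d(1,2) show thesis
    using two by (rule that)
qed

lemma adjacent_rho_leaves_siblings:
  assumes G: "undirected_graph G" and b: "b \<in> verts G" and d: "d \<in> closed_nbrs G b"
    and leaf_b: "is_leaf (rho G) (sib_class G b)" and leaf_d: "is_leaf (rho G) (sib_class G d)"
  shows "closed_nbrs G b = closed_nbrs G d"
proof -
  have dominated: "closed_nbrs G u = closed_nbrs G v \<or> closed_nbrs G u \<subseteq> closed_nbrs G v"
    if u: "u \<in> verts G" and v: "v \<in> closed_nbrs G u" and leaf: "is_leaf (rho G) (sib_class G u)"
    for u v
  proof -
    obtain e where "e \<in> closed_nbrs G u" "closed_nbrs G e \<noteq> closed_nbrs G u"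
      and "closed_nbrs G u \<subseteq> closed_nbrs G e"
      and "\<forall>y \<in> closed_nbrs G u. closed_nbrs G y = closed_nbrs G u \<or>
            closed_nbrs G y = closed_nbrs G e"
      by (rule rho_leafE[OF G u leaf])
    with v show ?thesis
      by auto
  qed
  have "d \<in> verts G"
    using closed_nbrs_subset_verts[OF G b] d by blast
  moreover have "b \<in> closed_nbrs G d"
    using closed_nbrs_sym[OF G] d by blast
  ultimately have "closed_nbrs G d = closed_nbrs G b \<or> closed_nbrs G d \<subseteq> closed_nbrs G b"
    using dominated leaf_d by blast
  moreover have "closed_nbrs G b = closed_nbrs G d \<or> closed_nbrs G b \<subseteq> closed_nbrs G d"
    using dominated[OF b d leaf_b] .
  ultimately show ?thesis
    by blast
qed

lemma leafE:
  assumes "l \<in> leaves G"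
  obtains s where "(l, s) \<in> edges G" "nbrs G l = {s}"
proof -
  obtain s where s: "nbrs G l = {s}"
    using assms by (auto simp: leaves_def is_leaf_def card_1_singleton_iff)
  then have "s \<in> nbrs G l"
    by simp
  then have "(l, s) \<in> edges G"
    by (simp add: nbrs_def)
  with s that show thesis
    by blast
qed

lemma leaf_nbrs_eq:
  assumes "l \<in> leaves G" and "(l, s) \<in> edges G"
  shows "nbrs G l = {s}"
proof -
  obtain a where a: "nbrs G l = {a}"
    using leafE[OF assms(1)] by metis
  moreover have "s \<in> nbrs G l"
    using assms(2) by (simp add: nbrs_def)
  ultimately show ?thesis
    by simp
qed

lemma leaves_not_adjacent:
  assumes G: "simple_graph G" "connected_graph G" "\<not> is_K2 G"
    and l: "l \<in> leaves G" and s: "s \<in> leaves G"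
  shows "(l, s) \<notin> edges G"
proof
  assume ls: "(l, s) \<in> edges G"
  then have sl: "(s, l) \<in> edges G" and "l \<noteq> s" and "l \<in> verts G" and "s \<in> verts G"
    using G(1) unfolding simple_graph_def sym_def by auto
  have nbrs: "nbrs G l = {s}" "nbrs G s = {l}"
    using leaf_nbrs_eq[OF l ls] leaf_nbrs_eq[OF s sl] .
  have "edges G `` {l, s} \<subseteq> {l, s}"
  proof
    fix w assume "w \<in> edges G `` {l, s}"
    then have "w \<in> nbrs G l \<union> nbrs G s"
      by (auto simp: nbrs_def)
    then show "w \<in> {l, s}"
      using nbrs by auto
  qed
  then have "(edges G)\<^sup>* `` {l, s} = {l, s}"
    by (rule Image_closed_trancl)
  moreover have "verts G \<subseteq> (edges G)\<^sup>* `` {l, s}"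
    using G(2) \<open>l \<in> verts G\<close> unfolding connected_graph_def by blast
  ultimately have "verts G = {l, s}"
    using \<open>l \<in> verts G\<close> \<open>s \<in> verts G\<close> by blast
  then have "is_K2 G"
    using ls sl \<open>l \<noteq> s\<close> unfolding is_K2_def by auto
  with G(3) show False ..
qed

locale leaf_deletion =
  fixes G :: "'a graph" and U :: "'a set"
  assumes simple: "simple_graph G" and connected: "connected_graph G" and not_K2: "\<not> is_K2 G"
    and U_leaves: "U \<subseteq> leaves G"
begin

abbreviation "H \<equiv> lambda_S U G"
abbreviation "X \<equiv> lambda G"
abbreviation "W \<equiv> \<Union>(leaves (rho H))"
abbreviation "V \<equiv> {C \<in> leaves (rho X). C \<subseteq> W}"
abbreviation "Y \<equiv> lambda_S (\<Union>V) X"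

lemma undirected_G: "undirected_graph G"
  using simple by (rule simple_graph_imp_undirected_graph)

lemma undirected_H: "undirected_graph H"
  using undirected_G by (rule undirected_graph_lambda_S)

lemma X_eq: "X = lambda_S (leaves G) H"
  using U_leaves by (simp add: lambda_def lambda_S_lambda_S Un_absorb1)

lemma undirected_X: "undirected_graph X"
  unfolding X_eq using undirected_H by (rule undirected_graph_lambda_S)

lemma verts_X: "verts X = verts H - leaves G"
  by (simp add: X_eq)

lemma closed_nbrs_X: "v \<in> verts X \<Longrightarrow> closed_nbrs X v = closed_nbrs H v \<inter> verts X"
  using closed_nbrs_lambda_S[of v H "leaves G"] X_eq by simp

lemma mem_W_iff: "v \<in> W \<longleftrightarrow> v \<in> verts H \<and> is_leaf (rho H) (sib_class H v)"
  by (rule mem_Union_leaves_rho_iff)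

lemma leaf_has_sibling_outside_W:
  assumes v: "v \<in> verts (lambda_S W H) \<inter> leaves G"
  shows "\<exists>w \<in> verts (lambda_S W H) - leaves G.
           closed_nbrs (lambda_S W H) w = closed_nbrs (lambda_S W H) v"
proof -
  have vH: "v \<in> verts H" and "v \<notin> W" and v_leaf: "v \<in> leaves G"
    using v by auto
  obtain s where vs: "(v, s) \<in> edges G" and nbrs_v: "nbrs G v = {s}"
    using v_leaf by (rule leafE)
  have s_leaf: "s \<notin> leaves G"
    using leaves_not_adjacent[OF simple connected not_K2 v_leaf] vs by blast
  have sH: "s \<in> verts H"
    using vs simple s_leaf U_leaves unfolding simple_graph_def by auto
  have closed_v: "closed_nbrs H v = {v, s}"
    using closed_nbrs_lambda_S[of v G U] vH sH nbrs_v by (simp add: closed_nbrs_def)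
  have siblings: "closed_nbrs H s = closed_nbrs H v"
  proof (rule ccontr)
    assume "closed_nbrs H s \<noteq> closed_nbrs H v"
    then have "\<exists>d \<in> {v, s}. closed_nbrs H d \<noteq> closed_nbrs H v \<and>
        (\<forall>y \<in> {v, s}. closed_nbrs H y = closed_nbrs H v \<or> closed_nbrs H y = closed_nbrs H d)"
      by auto
    then have "is_leaf (rho H) (sib_class H v)"
      using is_leaf_rho_sib_class_iff[OF undirected_H vH] closed_v by simp
    with \<open>v \<notin> W\<close> vH show False
      using mem_W_iff[of v] by simp
  qed
  then have "sib_class H s = sib_class H v"
    using sib_class_eq_iff[OF sH] by simp
  then have "s \<notin> W"
    using \<open>v \<notin> W\<close> vH sH mem_W_iff[of v] mem_W_iff[of s] by simp
  then have "s \<in> verts (lambda_S W H) - leaves G"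
    using sH s_leaf by simp
  moreover have "closed_nbrs (lambda_S W H) s = closed_nbrs (lambda_S W H) v"
    using closed_nbrs_lambda_S[of s H W] closed_nbrs_lambda_S[of v H W] siblings sH vH
      \<open>s \<notin> W\<close> \<open>v \<notin> W\<close> by simp
  ultimately show ?thesis
    by blast
qed

lemma closed_nbrs_W_disjoint_leaves:
  assumes bW: "b \<in> W" and b_leaf: "b \<notin> leaves G"
  shows "closed_nbrs H b \<inter> leaves G = {}"
proof (rule ccontr)
  assume "closed_nbrs H b \<inter> leaves G \<noteq> {}"
  then obtain y where y: "y \<in> closed_nbrs H b" and y_leaf: "y \<in> leaves G"
    by blast
  have bH: "b \<in> verts H" and leaf: "is_leaf (rho H) (sib_class H b)"
    using bW mem_W_iff[of b] by simp_all
  obtain d where d: "d \<in> closed_nbrs H b" "closed_nbrs H d \<noteq> closed_nbrs H b"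
    and dominated: "closed_nbrs H b \<subseteq> closed_nbrs H d"
    and two: "\<forall>y \<in> closed_nbrs H b. closed_nbrs H y = closed_nbrs H b \<or>
          closed_nbrs H y = closed_nbrs H d"
    by (rule rho_leafE[OF undirected_H bH leaf])
  have "y \<noteq> b"
    using y_leaf b_leaf by blast
  then have "(b, y) \<in> edges G"
    using y by (simp add: mem_closed_nbrs_iff)
  then have "(y, b) \<in> edges G"
    using undirected_G unfolding undirected_graph_def sym_def by blast
  then have "nbrs G y = {b}"
    using y_leaf by (intro leaf_nbrs_eq)
  then have "closed_nbrs G y = {y, b}"
    by (simp add: closed_nbrs_def)
  moreover have "y \<in> verts H"
    using closed_nbrs_subset_verts[OF undirected_H bH] y by blast
  ultimately have "closed_nbrs H y \<subseteq> {y, b}"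
    using closed_nbrs_lambda_S[of y G U] by auto
  moreover have "closed_nbrs H b \<subseteq> closed_nbrs H y"
    using two y dominated by auto
  moreover have "{y, b} \<subseteq> closed_nbrs H b"
    using y by simp
  \<comment> \<open>so y is a sibling of b and the closed neighbourhood {y, b} leaves no room for d\<close>
  ultimately have "closed_nbrs H y = closed_nbrs H b" and "d \<in> {y, b}"
    using d(1) by blast+
  with d(2) show False
    by auto
qed

lemma closed_nbrs_X_eq_H:
  assumes bW: "b \<in> W" and bX: "b \<in> verts X"
  shows "closed_nbrs X b = closed_nbrs H b"
proof -
  have bH: "b \<in> verts H" and "b \<notin> leaves G"
    using bX verts_X by auto
  then have "closed_nbrs H b \<subseteq> verts X"
    using closed_nbrs_W_disjoint_leaves[OF bW] closed_nbrs_subset_verts[OF undirected_H bH] verts_X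
    by blast
  then show ?thesis
    using closed_nbrs_X[OF bX] by blast
qed

lemma sib_class_X_mem_V:
  assumes bW: "b \<in> W" and bX: "b \<in> verts X" and d: "d \<in> closed_nbrs H b"
    and two: "\<forall>y \<in> closed_nbrs H b. closed_nbrs H y = closed_nbrs H b \<or>
          closed_nbrs H y = closed_nbrs H d"
    and not_siblings: "closed_nbrs X d \<noteq> closed_nbrs X b"
  shows "sib_class X b \<in> V"
proof -
  have Xb: "closed_nbrs X b = closed_nbrs H b"
    using bW bX by (rule closed_nbrs_X_eq_H)
  have closed_b_X: "closed_nbrs H b \<subseteq> verts X"
    using Xb closed_nbrs_subset_verts[OF undirected_X bX] by simp
  then have dX: "d \<in> verts X"
    using d by blast
  have Xy: "closed_nbrs X y = closed_nbrs X b \<or> closed_nbrs X y = closed_nbrs X d"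
    if "y \<in> closed_nbrs X b" for y
  proof -
    have y: "y \<in> closed_nbrs H b" and yX: "y \<in> verts X"
      using that Xb closed_b_X by auto
    then have "closed_nbrs H y = closed_nbrs H b \<or> closed_nbrs H y = closed_nbrs H d"
      using two by blast
    then show ?thesis
      unfolding closed_nbrs_X[OF yX] closed_nbrs_X[OF bX] closed_nbrs_X[OF dX] by metis
  qed
  have "d \<in> closed_nbrs X b"
    using d Xb by simp
  then have "\<exists>d' \<in> closed_nbrs X b. closed_nbrs X d' \<noteq> closed_nbrs X b \<and>
      (\<forall>y \<in> closed_nbrs X b. closed_nbrs X y = closed_nbrs X b \<or>
            closed_nbrs X y = closed_nbrs X d')"
    using not_siblings Xy by blast
  then have "is_leaf (rho X) (sib_class X b)"
    using is_leaf_rho_sib_class_iff[OF undirected_X bX] by simp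
  moreover have "sib_class X b \<subseteq> W"
  proof
    fix y assume "y \<in> sib_class X b"
    then have yX: "y \<in> verts X" and Xyb: "closed_nbrs X y = closed_nbrs X b"
      by (simp_all add: mem_sib_class_iff)
    then have y: "y \<in> closed_nbrs H b"
      using Xb closed_nbrs_self[of y X] by simp
    have yH: "y \<in> verts H"
      using yX verts_X by simp
    have "closed_nbrs H y = closed_nbrs H b"
    proof (rule ccontr)
      assume "closed_nbrs H y \<noteq> closed_nbrs H b"
      then have "closed_nbrs H y = closed_nbrs H d"
        using two y by blast
      then have "closed_nbrs X y = closed_nbrs X d"
        using closed_nbrs_X[OF yX] closed_nbrs_X[OF dX] by simp
      with Xyb not_siblings show False
        by simp
    qed
    then have "sib_class H y = sib_class H b"
      using sib_class_eq_iff[OF yH] by simp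
    then show "y \<in> W"
      using bW yH mem_W_iff[of y] mem_W_iff[of b] by simp
  qed
  ultimately show ?thesis
    by (simp add: leaves_def)
qed

lemma W_vertex_has_sibling_outside_W:
  assumes b: "b \<in> verts Y \<inter> W"
  shows "\<exists>w \<in> verts Y - W. closed_nbrs Y w = closed_nbrs Y b"
proof -
  have bX: "b \<in> verts X" and b_not_V: "b \<notin> \<Union>V" and bW: "b \<in> W"
    using b by auto
  have bH: "b \<in> verts H" and leaf: "is_leaf (rho H) (sib_class H b)"
    using bW mem_W_iff[of b] by simp_all
  obtain d where d: "d \<in> closed_nbrs H b" "closed_nbrs H d \<noteq> closed_nbrs H b"
    and "closed_nbrs H b \<subseteq> closed_nbrs H d"
    and two: "\<forall>y \<in> closed_nbrs H b. closed_nbrs H y = closed_nbrs H b \<or>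
          closed_nbrs H y = closed_nbrs H d"
    by (rule rho_leafE[OF undirected_H bH leaf])
  have siblings_X: "closed_nbrs X d = closed_nbrs X b"
  proof (rule ccontr)
    assume "closed_nbrs X d \<noteq> closed_nbrs X b"
    with bW bX d(1) two have "sib_class X b \<in> V"
      by (rule sib_class_X_mem_V)
    with b_not_V show False
      using sib_class_self[OF bX] by blast
  qed
  have "d \<notin> W"
  proof
    assume "d \<in> W"
    then have "is_leaf (rho H) (sib_class H d)"
      using mem_W_iff[of d] by simp
    with d(2) show False
      using adjacent_rho_leaves_siblings[OF undirected_H bH d(1) leaf] by simp
  qed
  moreover have "d \<in> verts X"
    using d(1) closed_nbrs_X_eq_H[OF bW bX] closed_nbrs_subset_verts[OF undirected_X bX] by blast
  ultimately have dY: "d \<in> verts Y"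
    by auto
  moreover have "closed_nbrs Y d = closed_nbrs Y b"
    using closed_nbrs_lambda_S[of d X "\<Union>V"] closed_nbrs_lambda_S[of b X "\<Union>V"] siblings_X dY b
    by simp
  ultimately show ?thesis
    using \<open>d \<notin> W\<close> by blast
qed

lemma lambda_S_leaves_lambda_S_W: "lambda_S (leaves G) (lambda_S W H) = lambda_S W Y"
proof -
  have "\<Union>V \<subseteq> W"
    by blast
  then have "U \<union> W \<union> leaves G = leaves G \<union> \<Union>V \<union> W"
    using U_leaves by blast
  then show ?thesis
    unfolding lambda_def lambda_S_lambda_S by (simp only:)
qed

lemma graph_iso_rho_lambda_rho_H: "graph_iso (rho (lambda (rho H))) (rho (lambda_S V (rho X)))"
proof -
  from undirected_H leaves_subset_verts have "graph_iso (rho (lambda (rho H))) (rho (lambda_S W H))"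
    unfolding lambda_def[of "rho H"] by (intro graph_iso_sym[OF graph_iso_rho_lambda_S_Union])
  also have "graph_iso (rho (lambda_S W H)) (rho (lambda_S (leaves G) (lambda_S W H)))"
    using undirected_graph_lambda_S[OF undirected_H] leaf_has_sibling_outside_W
    by (rule graph_iso_rho_lambda_S_of_siblings)
  also have "lambda_S (leaves G) (lambda_S W H) = lambda_S W Y"
    by (rule lambda_S_leaves_lambda_S_W)
  also have "graph_iso (rho (lambda_S W Y)) (rho Y)"
    using undirected_graph_lambda_S[OF undirected_X] W_vertex_has_sibling_outside_W
    by (intro graph_iso_sym[OF graph_iso_rho_lambda_S_of_siblings])
  also have "graph_iso (rho Y) (rho (lambda_S V (rho X)))"
  proof (rule graph_iso_rho_lambda_S_Union[OF undirected_X])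
    show "V \<subseteq> verts (rho X)"
      using leaves_subset_verts[of "rho X"] by blast
  qed
  finally show ?thesis .
qed

end

theorem theorem5p1:
  fixes G :: "'a graph" and U :: "'a set"
  assumes "simple_graph G" and "connected_graph G" and "\<not> is_K2 G"
    and "U \<subseteq> leaves G"
  shows "\<exists>V. V \<subseteq> leaves (rho (lambda G)) \<and>
           graph_iso (rho (lambda (rho (lambda_S U G))))
                     (rho (lambda_S V (rho (lambda G))))"
proof -
  interpret leaf_deletion G U
    using assms by unfold_locales
  show ?thesis
  proof (intro exI[of _ V] conjI)
    show "V \<subseteq> leaves (rho (lambda G))"
      by blast
  qed (rule graph_iso_rho_lambda_rho_H)
qed

end
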